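(* Let $\Theta=(\theta_1,\dots,\theta_N)$ be a realisation of a Kuramoto stochastic block model (real-valued lifted phases) which is in synchronized steady state by time $t_{SS}$, let $\omega$ denote the common frequency $\dot\theta_i(t)$ for $t\ge t_{SS}$, and let $\Delta\theta_i=\theta_i(t_{SS})$. Let $e^{\imath\Theta}$ denote the complex path $t\mapsto(e^{\imath\theta_1(t)},\dots,e^{\imath\theta_N(t)})$. Then for every $T>0$, $M\ge 1$ and $I=(i_1,\dots,i_M)\in[N]^M$, $$S^{SS}_I(e^{\imath\Theta})(T)=\frac{\lambda_I}{M!}\left(e^{\imath\omega T}-1\right)^M,\qquad \lambda_I=e^{\imath\sum_{k=1}^M\Delta\theta_{i_k}},$$ and for all $i,j\in[N]$, $L^{SS}_{ij}(e^{\imath\Theta})(T)=0$.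
   Context: A Kuramoto stochastic block model (KSBM) realisation is a solution of $\dot\theta_i=\omega_i+\sum_j\widetilde C_{ij}\sin(\theta_j-\theta_i)$, $i\in[N]$, where the coupling matrix $\widetilde C$ is obtained from a stochastic block model adjacency matrix and the intrinsic frequencies $\omega_i$ are real numbers; phases are lifted to $\mathbb{R}$. The system is in synchronized steady state by time $t_{SS}$ if $\dot\theta_i(t)=\dot\theta_j(t)$ for all $i,j$ and all $t\ge t_{SS}$; this common value does not depend on $t$ and is denoted $\omega$, so that $\theta_i(t)=\omega(t-t_{SS})+\Delta\theta_i$ for $t\ge t_{SS}$. For a piecewise smooth path $\gamma:[a,b]\to\mathbb{C}^N$ and $I=(i_1,\dots,i_M)$, the path signature is $S_I(\gamma)=\int_{a<t_1<\dots<t_M<b}\dot\gamma_{i_1}(t_1)\cdots\dot\gamma_{i_M}(t_M)\,dt_1\cdots dt_M$; the lead matrix is $L_{ij}(\gamma)=\frac12(S_{(i,j)}(\gamma)-S_{(j,i)}(\gamma))$. Steady-state versions: $S^{SS}_I(\gamma)(T)=S_I(\gamma|_{[t_{SS},t_{SS}+T]})$, $L^{SS}_{ij}(\gamma)(T)=L_{ij}(\gamma|_{[t_{SS},t_{SS}+T]})$. *)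

theory Defs
  imports "HOL-Analysis.Analysis"
begin

text \<open>Kuramoto dynamics: theta i is the (lifted) phase of oscillator i (i < N),
  C the coupling matrix, om the intrinsic frequencies. The ODE is required at every time t (phases lifted to R).\<close>
definition kuramoto_solution ::
  "nat \<Rightarrow> (nat \<Rightarrow> nat \<Rightarrow> real) \<Rightarrow> (nat \<Rightarrow> real) \<Rightarrow> (nat \<Rightarrow> real \<Rightarrow> real) \<Rightarrow> bool" where
  "kuramoto_solution N C om theta \<longleftrightarrow>
     (\<forall>i<N. \<forall>t. (theta i has_real_derivative
        (om i + (\<Sum>j<N. C i j * sin (theta j t - theta i t)))) (at t))"

definition sync_steady_state :: "nat \<Rightarrow> (nat \<Rightarrow> real \<Rightarrow> real) \<Rightarrow> real \<Rightarrow> bool" where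
  "sync_steady_state N theta tSS \<longleftrightarrow>
     (\<forall>t\<ge>tSS. \<forall>i<N. \<forall>j<N. deriv (theta i) t = deriv (theta j) t)"

fun path_sig :: "(nat \<Rightarrow> real \<Rightarrow> complex) \<Rightarrow> nat list \<Rightarrow> real \<Rightarrow> real \<Rightarrow> complex" where
  "path_sig \<gamma> [] a b = 1"
| "path_sig \<gamma> (i # I) a b =
     integral {a..b} (\<lambda>s. vector_derivative (\<gamma> i) (at s within {a..b}) * path_sig \<gamma> I s b)"

definition lead_matrix :: "(nat \<Rightarrow> real \<Rightarrow> complex) \<Rightarrow> nat \<Rightarrow> nat \<Rightarrow> real \<Rightarrow> real \<Rightarrow> complex" where
  "lead_matrix \<gamma> i j a b = (path_sig \<gamma> [i, j] a b - path_sig \<gamma> [j, i] a b) / 2"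

definition sig_SS :: "(nat \<Rightarrow> real \<Rightarrow> complex) \<Rightarrow> real \<Rightarrow> nat list \<Rightarrow> real \<Rightarrow> complex" where
  "sig_SS \<gamma> tSS I T = path_sig \<gamma> I tSS (tSS + T)"

definition lead_SS :: "(nat \<Rightarrow> real \<Rightarrow> complex) \<Rightarrow> real \<Rightarrow> nat \<Rightarrow> nat \<Rightarrow> real \<Rightarrow> complex" where
  "lead_SS \<gamma> tSS i j T = lead_matrix \<gamma> i j tSS (tSS + T)"

definition exp_i_path :: "(nat \<Rightarrow> real \<Rightarrow> real) \<Rightarrow> nat \<Rightarrow> real \<Rightarrow> complex" where
  "exp_i_path theta i t = exp (\<i> * complex_of_real (theta i t))"

end

theory Submission
  imports Defs
begin

text \<open>In steady state every phase is affine, \<open>\<theta>\<^sub>i(t) = \<Delta>\<theta>\<^sub>i + \<omega> (t - tSS)\<close>, so each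
  coordinate of the path is a constant multiple \<open>c\<^sub>i E(t)\<close> of the single curve
  \<open>E(t) = exp (\<i> \<omega> (t - tSS))\<close>. For such a path the iterated integrals collapse: since
  \<open>E'(s) (E(b) - E(s))^m\<close> integrates over \<open>[a, b]\<close> to \<open>(E(b) - E(a))^(m+1) / (m+1)\<close>,
  induction on the length \<open>M\<close> of the multi-index gives the signature
  \<open>c\<^sub>i\<^sub>1 \<cdots> c\<^sub>i\<^sub>M (E(b) - E(a))^M / M!\<close>. This is symmetric in the multi-index, so
  the two signature terms of the lead matrix cancel.\<close>

lemma has_vector_derivative_power:
  fixes f :: "real \<Rightarrow> 'a::real_normed_field"
  assumes "(f has_vector_derivative f') (at x within S)"
  shows "((\<lambda>x. f x ^ n) has_vector_derivative of_nat n * f x ^ (n - 1) * f') (at x within S)"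
  using has_derivative_power[OF assms[unfolded has_vector_derivative_def], of n]
  by (simp add: has_vector_derivative_def scaleR_conv_of_real ac_simps)

lemma has_integral_derivative_mult_power:
  fixes E E' :: "real \<Rightarrow> 'a::{real_normed_field,banach}"
  assumes "a \<le> b"
    and E: "\<And>s. s \<in> {a..b} \<Longrightarrow> (E has_vector_derivative E' s) (at s within {a..b})"
  shows "((\<lambda>s. E' s * (E b - E s) ^ n) has_integral (E b - E a) ^ Suc n / of_nat (Suc n)) {a..b}"
proof -
  define F where "F s = - ((E b - E s) ^ Suc n / of_nat (Suc n))" for s
  have "((\<lambda>s. E' s * (E b - E s) ^ n) has_integral F b - F a) {a..b}"
  proof (rule fundamental_theorem_of_calculus[OF \<open>a \<le> b\<close>])
    fix s assume s: "s \<in> {a..b}"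
    have "((\<lambda>s. E b - E s) has_vector_derivative 0 - E' s) (at s within {a..b})"
      using E[OF s] by (intro derivative_intros)
    from has_vector_derivative_power[OF this, of "Suc n"]
    have "(F has_vector_derivative - (of_nat (Suc n) * (E b - E s) ^ n * (0 - E' s) / of_nat (Suc n)))
            (at s within {a..b})"
      unfolding F_def by (intro derivative_intros) simp
    moreover have "- (of_nat (Suc n) * (E b - E s) ^ n * (0 - E' s) / of_nat (Suc n)) = E' s * (E b - E s) ^ n"
      by (simp del: of_nat_Suc)
    ultimately show "(F has_vector_derivative E' s * (E b - E s) ^ n) (at s within {a..b})"
      by simp
  qed
  then show ?thesis by (simp add: F_def)
qed

lemma path_sig_of_scaled_curve:
  fixes \<gamma> :: "nat \<Rightarrow> real \<Rightarrow> complex" and c :: "nat \<Rightarrow> complex"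
  assumes "a \<le> b"
    and E: "\<And>s. s \<in> {a..b} \<Longrightarrow> (E has_vector_derivative E' s) (at s within {a..b})"
    and \<gamma>: "\<And>i s. i \<in> set I \<Longrightarrow> s \<in> {a..b} \<Longrightarrow> \<gamma> i s = c i * E s"
  shows "path_sig \<gamma> I a b = prod_list (map c I) * (E b - E a) ^ length I / fact (length I)"
  using assms
proof (induction I arbitrary: a)
  case Nil
  then show ?case by simp
next
  case (Cons i I)
  define m where "m = length I"
  define P where "P = prod_list (map c I)"
  have sig_I: "path_sig \<gamma> I s b = P * (E b - E s) ^ m / fact m" if "s \<in> {a..b}" for s
  proof (rule Cons.IH[folded m_def P_def])
    show "(E has_vector_derivative E' t) (at t within {s..b})" if "t \<in> {s..b}" for t
      using Cons.prems(2)[of t] that \<open>s \<in> {a..b}\<close>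
      by (auto intro: has_vector_derivative_within_subset)
  qed (use that Cons.prems(3) in auto)
  have vd: "vector_derivative (\<gamma> i) (at s within {a..b}) = c i * E' s" if "s \<in> {a..b} - {a, b}" for s
  proof (rule vector_derivative_within_closed_interval)
    show "a < b" "s \<in> {a..b}" using that by auto
    have "((\<lambda>s. c i * E s) has_vector_derivative c i * E' s) (at s within {a..b})"
      using Cons.prems(2) that by (auto intro: derivative_intros)
    then show "(\<gamma> i has_vector_derivative c i * E' s) (at s within {a..b})"
      by (rule has_vector_derivative_transform[rotated 2]) (use that Cons.prems(3) in auto)
  qed
  have "((\<lambda>s. vector_derivative (\<gamma> i) (at s within {a..b}) * path_sig \<gamma> I s b) has_integral
          c i * P / fact m * ((E b - E a) ^ Suc m / of_nat (Suc m))) {a..b}"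
  \<comment> \<open>Excluding the endpoints also covers \<open>a = b\<close>, where the vector derivative is arbitrary.\<close>
  proof (rule has_integral_spike_finite[where S = "{a, b}"])
    show "((\<lambda>s. c i * P / fact m * (E' s * (E b - E s) ^ m)) has_integral
            c i * P / fact m * ((E b - E a) ^ Suc m / of_nat (Suc m))) {a..b}"
      using has_integral_derivative_mult_power[OF Cons.prems(1,2)] by (rule has_integral_mult_right)
  qed (auto simp: vd sig_I)
  then have "path_sig \<gamma> (i # I) a b = c i * P / fact m * ((E b - E a) ^ Suc m / of_nat (Suc m))"
    by (simp add: integral_unique)
  then show ?case
    by (simp add: m_def P_def fact_Suc del: of_nat_Suc)
qed

lemma exp_i_sum_nth_eq_prod_list:
  "exp (\<i> * of_real (\<Sum>k<length I. f (I ! k))) = prod_list (map (\<lambda>i. exp (\<i> * of_real (f i))) I)"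
proof -
  have "(\<Sum>k<length I. f (I ! k)) = sum_list (map f I)"
    by (simp add: sum_list_sum_nth atLeast0LessThan)
  moreover have "exp (\<i> * of_real (sum_list (map f I))) = prod_list (map (\<lambda>i. exp (\<i> * of_real (f i))) I)"
    by (induction I) (simp_all add: distrib_left exp_add)
  ultimately show ?thesis by simp
qed

lemma has_vector_derivative_exp_i_linear:
  "((\<lambda>s. exp (\<i> * of_real (\<omega> * (s - t0)))) has_vector_derivative
     \<i> * of_real \<omega> * exp (\<i> * of_real (\<omega> * (s - t0)))) (at s within S)"
proof -
  have "((\<lambda>z. exp (\<i> * (of_real \<omega> * (z - of_real t0)))) has_field_derivative
     \<i> * of_real \<omega> * exp (\<i> * (of_real \<omega> * (of_real s - of_real t0)))) (at (of_real s))"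
    by (auto intro!: derivative_eq_intros)
  from has_vector_derivative_real_field[OF this] show ?thesis
    by simp
qed

lemma has_real_derivative_const_imp_affine:
  fixes f :: "real \<Rightarrow> real"
  assumes "\<And>s. t0 \<le> s \<Longrightarrow> (f has_real_derivative d) (at s)" and "t0 \<le> t"
  shows "f t = f t0 + d * (t - t0)"
proof (cases "t0 = t")
  case False
  with assms have "\<exists>z. t0 < z \<and> z < t \<and> f t - f t0 = (t - t0) * d"
    by (intro MVT2) auto
  then show ?thesis by (auto simp: algebra_simps)
qed simp

lemma kuramoto_phase_affine:
  assumes "kuramoto_solution N C om theta" and "i < N"
    and "\<And>t. t0 \<le> t \<Longrightarrow> deriv (theta i) t = \<omega>" and "t0 \<le> t"
  shows "theta i t = theta i t0 + \<omega> * (t - t0)"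
proof (rule has_real_derivative_const_imp_affine[OF _ \<open>t0 \<le> t\<close>])
  fix s assume "t0 \<le> s"
  obtain d where d: "(theta i has_real_derivative d) (at s)"
    using assms(1,2) unfolding kuramoto_solution_def by blast
  moreover have "d = \<omega>"
    using DERIV_imp_deriv[OF d] assms(3)[OF \<open>t0 \<le> s\<close>] by simp
  ultimately show "(theta i has_real_derivative \<omega>) (at s)" by simp
qed

lemma sig_SS_exp_i_path_kuramoto:
  assumes "kuramoto_solution N C om theta"
    and "\<And>i t. i < N \<Longrightarrow> t0 \<le> t \<Longrightarrow> deriv (theta i) t = \<omega>"
    and "set I \<subseteq> {..<N}" and "0 \<le> T"
  shows "sig_SS (exp_i_path theta) t0 I T =
    prod_list (map (\<lambda>i. exp (\<i> * of_real (theta i t0))) I)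
      * (exp (\<i> * of_real (\<omega> * T)) - 1) ^ length I / fact (length I)"
proof -
  define E where "E s = exp (\<i> * of_real (\<omega> * (s - t0)))" for s
  have path: "exp_i_path theta i s = exp (\<i> * of_real (theta i t0)) * E s"
    if "i < N" "t0 \<le> s" for i s
    using kuramoto_phase_affine[OF assms(1) that(1) _ that(2)] assms(2) that(1)
    by (simp add: exp_i_path_def E_def distrib_left exp_add)
  have "path_sig (exp_i_path theta) I t0 (t0 + T) =
      prod_list (map (\<lambda>i. exp (\<i> * of_real (theta i t0))) I)
        * (E (t0 + T) - E t0) ^ length I / fact (length I)"
  proof (rule path_sig_of_scaled_curve)
    show "(E has_vector_derivative \<i> * of_real \<omega> * E s) (at s within {t0..t0 + T})" for s
      unfolding E_def by (rule has_vector_derivative_exp_i_linear)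
  qed (use path assms(3,4) in auto)
  then show ?thesis
    by (simp add: sig_SS_def E_def)
qed

theorem lemma18:
  fixes N :: nat and C :: "nat \<Rightarrow> nat \<Rightarrow> real" and om :: "nat \<Rightarrow> real"
    and theta :: "nat \<Rightarrow> real \<Rightarrow> real" and tSS \<omega> T :: real
  assumes "kuramoto_solution N C om theta"
    and "sync_steady_state N theta tSS"
    and "\<forall>i<N. \<forall>t\<ge>tSS. deriv (theta i) t = \<omega>"
    and "T > 0"
  shows "(\<forall>I. length I \<ge> 1 \<and> set I \<subseteq> {..<N} \<longrightarrow>
            sig_SS (exp_i_path theta) tSS I T =
              exp (\<i> * complex_of_real (\<Sum>k<length I. theta (I ! k) tSS)) / fact (length I)
              * (exp (\<i> * complex_of_real (\<omega> * T)) - 1) ^ length I)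
       \<and> (\<forall>i<N. \<forall>j<N. lead_SS (exp_i_path theta) tSS i j T = 0)"
proof -
  have sig: "sig_SS (exp_i_path theta) tSS I T =
      prod_list (map (\<lambda>i. exp (\<i> * of_real (theta i tSS))) I)
        * (exp (\<i> * of_real (\<omega> * T)) - 1) ^ length I / fact (length I)"
    if "set I \<subseteq> {..<N}" for I
    using sig_SS_exp_i_path_kuramoto[OF assms(1) _ that] assms(3,4) by simp
  show ?thesis
  proof (intro conjI allI impI)
    fix I :: "nat list" assume "1 \<le> length I \<and> set I \<subseteq> {..<N}"
    then show "sig_SS (exp_i_path theta) tSS I T =
        exp (\<i> * complex_of_real (\<Sum>k<length I. theta (I ! k) tSS)) / fact (length I)
        * (exp (\<i> * complex_of_real (\<omega> * T)) - 1) ^ length I"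
      by (simp add: sig exp_i_sum_nth_eq_prod_list[of "\<lambda>i. theta i tSS"] del: of_real_sum)
  next
    fix i j assume "i < N" "j < N"
    then have "sig_SS (exp_i_path theta) tSS [i, j] T = sig_SS (exp_i_path theta) tSS [j, i] T"
      by (simp add: sig mult.commute)
    then show "lead_SS (exp_i_path theta) tSS i j T = 0"
      by (simp add: lead_SS_def lead_matrix_def sig_SS_def)
  qed
qed

end
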